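(* Let $m\ge3$, let $\tilde\omega$ be a symmetric fractional polymorphism of $\Gamma$ of arity $m-1$, and let $\tilde{\mathbb G}$ and $\mathbb G$ be as below. Then $\tilde{\mathbb G}\subseteq\mathbb G$.
   Context: $D$ finite, $\Gamma$ a finite set of cost functions $f:D^n\to\mathbb Q\cup\{\infty\}$, $\mathrm{dom} f=\{x:f(x)<\infty\}$. A $k$-ary fractional polymorphism: probability distribution $\nu$ on operations $g:D^k\to D$ with $\sum\nu(g)f(g(x^1,\dots,x^k))\le\frac1k\sum f(x^i)$ for $f\in\Gamma$, $x^i\in\mathrm{dom} f$ (componentwise); symmetric if all support operations are invariant under all permutations of arguments. Maps $\mathbf g=(g_1,\dots,g_m):D^m\to D^m$ act on $[D^n]^m$ coordinatewise; $f^m(x)=\frac1m\sum f(x^i)$; generalized fractional polymorphism of arity $m\to m$: finitely supported probability distribution $\rho$ on maps with $\sum\rho(\mathbf g)f^m(\mathbf g(x))\le f^m(x)$ for $f\in\Gamma$, $x\in[\mathrm{dom} f]^m$. $\Omega=\{\mathbf g:(g_{\pi(1)},\dots,g_{\pi(m)})(x)=\mathbf g(x_{\pi(1)},\dots,x_{\pi(m)})\ \forall x\in D^m,\pi\}$. $\omega$: generalized fractional polymorphism of arity $m\to m$ with support in $\Omega$ containing the support of every other such; $\mathbb G=\{\mathbf g_k\circ\dots\circ\mathbf g_1:k\ge0,\mathbf g_i\in\mathrm{supp}(\omega)\}$. For $x\in D^m$ and $k\in[m]$, $x_{-k}\in D^{m-1}$ is $x$ with the $k$-th entry deleted. For $s\in\mathrm{supp}(\tilde\omega)$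 define $\mathbb 1^s:D^m\to D^m$ by $\mathbb 1^s(x)=(s(x_{-1}),\dots,s(x_{-m}))$, and $\tilde{\mathbb G}=\{\mathbb 1^{s_k}\circ\dots\circ\mathbb 1^{s_1}:k\ge0,s_i\in\mathrm{supp}(\tilde\omega)\}$ (identity for $k=0$). *)

theory Defs
  imports Main "HOL-Library.FuncSet" "HOL-Library.Extended_Real" "HOL-Combinatorics.Permutations"
begin

definition tuples :: "nat \<Rightarrow> 'd list set" where
  "tuples k = {x. length x = k}"

(* k-ary operations D^k -> D, represented extensionally (undefined off D^k) *)
definition ops :: "nat \<Rightarrow> ('d list \<Rightarrow> 'd) set" where
  "ops k = (tuples k \<rightarrow>\<^sub>E (UNIV :: 'd set))"

definition maps :: "nat \<Rightarrow> ('d list \<Rightarrow> 'd list) set" where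
  "maps m = (tuples m \<rightarrow>\<^sub>E tuples m)"

definition language :: "(nat \<times> ('d list \<Rightarrow> ereal)) set \<Rightarrow> bool" where
  "language \<Gamma> \<longleftrightarrow> finite \<Gamma> \<and>
     (\<forall>(n, f) \<in> \<Gamma>. \<forall>x \<in> tuples n. f x = \<infinity> \<or> (\<exists>q::rat. f x = ereal (of_rat q)))"

definition dom_cost :: "nat \<Rightarrow> ('d list \<Rightarrow> ereal) \<Rightarrow> 'd list set" where
  "dom_cost n f = {x \<in> tuples n. f x < \<infinity>}"

definition supp :: "('a \<Rightarrow> real) \<Rightarrow> 'a set" where
  "supp \<nu> = {g. \<nu> g \<noteq> 0}"

definition prob_dist :: "'a set \<Rightarrow> ('a \<Rightarrow> real) \<Rightarrow> bool" where
  "prob_dist A \<nu> \<longleftrightarrow> finite (supp \<nu>) \<and> supp \<nu> \<subseteq> A \<and> (\<forall>g. \<nu> g \<ge> 0) \<and> (\<Sum>g\<in>supp \<nu>. \<nu> g) = 1"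

definition apply_op :: "('d list \<Rightarrow> 'd) \<Rightarrow> nat \<Rightarrow> nat \<Rightarrow> 'd list list \<Rightarrow> 'd list" where
  "apply_op g k n xs = map (\<lambda>j. g (map (\<lambda>l. xs ! l ! j) [0..<k])) [0..<n]"

definition apply_map :: "('d list \<Rightarrow> 'd list) \<Rightarrow> nat \<Rightarrow> nat \<Rightarrow> 'd list list \<Rightarrow> 'd list list" where
  "apply_map g m n xs =
     map (\<lambda>i. map (\<lambda>j. g (map (\<lambda>l. xs ! l ! j) [0..<m]) ! i) [0..<n]) [0..<m]"

definition avg_cost :: "nat \<Rightarrow> ('d list \<Rightarrow> ereal) \<Rightarrow> 'd list list \<Rightarrow> ereal" where
  "avg_cost m f xs = ereal (1 / real m) * (\<Sum>i<m. f (xs ! i))"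

definition fractional_polymorphism ::
  "(nat \<times> ('d list \<Rightarrow> ereal)) set \<Rightarrow> nat \<Rightarrow> (('d list \<Rightarrow> 'd) \<Rightarrow> real) \<Rightarrow> bool" where
  "fractional_polymorphism \<Gamma> k \<nu> \<longleftrightarrow> prob_dist (ops k) \<nu> \<and>
     (\<forall>(n, f) \<in> \<Gamma>. \<forall>xs. length xs = k \<longrightarrow> (\<forall>i<k. xs ! i \<in> dom_cost n f) \<longrightarrow>
        (\<Sum>g\<in>supp \<nu>. ereal (\<nu> g) * f (apply_op g k n xs)) \<le> avg_cost k f xs)"

definition symmetric_op :: "nat \<Rightarrow> ('d list \<Rightarrow> 'd) \<Rightarrow> bool" where
  "symmetric_op k g \<longleftrightarrow> (\<forall>\<pi> x. \<pi> permutes {0..<k} \<longrightarrow> x \<in> tuples k \<longrightarrow>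
      g (map (\<lambda>i. x ! \<pi> i) [0..<k]) = g x)"

definition symmetric_fractional_polymorphism ::
  "(nat \<times> ('d list \<Rightarrow> ereal)) set \<Rightarrow> nat \<Rightarrow> (('d list \<Rightarrow> 'd) \<Rightarrow> real) \<Rightarrow> bool" where
  "symmetric_fractional_polymorphism \<Gamma> k \<nu> \<longleftrightarrow>
     fractional_polymorphism \<Gamma> k \<nu> \<and> (\<forall>g \<in> supp \<nu>. symmetric_op k g)"

definition generalized_fractional_polymorphism ::
  "(nat \<times> ('d list \<Rightarrow> ereal)) set \<Rightarrow> nat \<Rightarrow> (('d list \<Rightarrow> 'd list) \<Rightarrow> real) \<Rightarrow> bool" where
  "generalized_fractional_polymorphism \<Gamma> m \<rho> \<longleftrightarrow> prob_dist (maps m) \<rho> \<and>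
     (\<forall>(n, f) \<in> \<Gamma>. \<forall>xs. length xs = m \<longrightarrow> (\<forall>i<m. xs ! i \<in> dom_cost n f) \<longrightarrow>
        (\<Sum>g\<in>supp \<rho>. ereal (\<rho> g) * avg_cost m f (apply_map g m n xs)) \<le> avg_cost m f xs)"

definition Omega :: "nat \<Rightarrow> ('d list \<Rightarrow> 'd list) set" where
  "Omega m = {g \<in> maps m. \<forall>\<pi> x. \<pi> permutes {0..<m} \<longrightarrow> x \<in> tuples m \<longrightarrow>
      map (\<lambda>i. g x ! \<pi> i) [0..<m] = g (map (\<lambda>i. x ! \<pi> i) [0..<m])}"

inductive_set comp_closure :: "nat \<Rightarrow> ('d list \<Rightarrow> 'd list) set \<Rightarrow> ('d list \<Rightarrow> 'd list) set"
  for m A where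
  ident: "(\<lambda>x\<in>tuples m. x) \<in> comp_closure m A"
| step: "h \<in> comp_closure m A \<Longrightarrow> g \<in> A \<Longrightarrow> compose (tuples m) g h \<in> comp_closure m A"

(* x_{-k}: delete the k-th entry (0-indexed) *)
definition del :: "nat \<Rightarrow> 'a list \<Rightarrow> 'a list" where
  "del k x = take k x @ drop (Suc k) x"

definition one_s :: "nat \<Rightarrow> ('d list \<Rightarrow> 'd) \<Rightarrow> 'd list \<Rightarrow> 'd list" where
  "one_s m s = (\<lambda>x\<in>tuples m. map (\<lambda>k. s (del k x)) [0..<m])"

end

theory Submission imports Defs begin

text \<open>For a symmetric fractional polymorphism \<open>\<omega>'\<close> of arity \<open>m - 1\<close>, the maps \<open>\<one>\<^sup>s\<close>, weighted
  by \<open>\<omega>'(s)\<close>, form a generalized fractional polymorphism of arity \<open>m \<rightarrow> m\<close>: each of the \<open>m\<close>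
  output rows is \<open>s\<close> applied to the \<open>m - 1\<close> rows left after deleting one input row, so averaging
  the defining inequality of \<open>\<omega>'\<close> over the \<open>m\<close> deletions charges every input row exactly
  \<open>m - 1\<close> times. Symmetry of \<open>s\<close> makes \<open>\<one>\<^sup>s\<close> permutation-equivariant, so by maximality of
  \<open>\<omega>\<close> every \<open>\<one>\<^sup>s\<close> lies in the support of \<open>\<omega>\<close>, and the generated composition monoids are
  nested.\<close>

lemma length_del [simp]: "i < length ys \<Longrightarrow> length (del i ys) = length ys - 1"
  by (simp add: del_def)

lemma nth_del:
  "i < length ys \<Longrightarrow> l < length ys - 1 \<Longrightarrow> del i ys ! l = ys ! (if l < i then l else Suc l)"
  by (auto simp: del_def nth_append min_def)

lemma mset_del: "i < length ys \<Longrightarrow> mset ys = add_mset (ys ! i) (mset (del i ys))"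
  by (subst id_take_nth_drop[of i ys]) (simp_all add: del_def)

lemma sum_list_map_del:
  fixes g :: "'a \<Rightarrow> 'b::ab_group_add"
  assumes "i < length ys"
  shows "sum_list (map g (del i ys)) = sum_list (map g ys) - g (ys ! i)"
proof -
  have sum_mset: "sum_list (map g zs) = sum_mset (image_mset g (mset zs))" for zs
    by (metis mset_map sum_mset_sum_list)
  show ?thesis
    using mset_del[OF assms] sum_mset[of ys] sum_mset[of "del i ys"] by (simp add: algebra_simps)
qed

lemma sum_sum_list_map_del:
  fixes g :: "'a \<Rightarrow> 'b::comm_ring_1"
  shows "(\<Sum>i<length ys. sum_list (map g (del i ys))) = (of_nat (length ys) - 1) * sum_list (map g ys)"
proof -
  have "(\<Sum>i<length ys. sum_list (map g (del i ys)))
      = (\<Sum>i<length ys. sum_list (map g ys) - g (ys ! i))"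
    by (intro sum.cong) (simp_all add: sum_list_map_del)
  also have "\<dots> = of_nat (length ys) * sum_list (map g ys) - sum_list (map g ys)"
    by (simp add: sum_subtractf sum_list_sum_nth atLeast0LessThan)
  finally show ?thesis by (simp add: algebra_simps)
qed

lemma average_over_deletions_le:
  fixes R :: "'a \<Rightarrow> real"
  assumes "length xs = m" "m \<ge> 2"
    and "\<And>i. i < m \<Longrightarrow> (\<Sum>s\<in>S. w s * c i s) \<le> sum_list (map R (del i xs)) / real (m - 1)"
  shows "(\<Sum>s\<in>S. w s * ((\<Sum>i<m. c i s) / real m)) \<le> sum_list (map R xs) / real m"
proof -
  have "(\<Sum>s\<in>S. w s * ((\<Sum>i<m. c i s) / real m)) = (\<Sum>i<m. \<Sum>s\<in>S. w s * c i s) / real m"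
    by (simp add: sum_distrib_left sum_divide_distrib sum.swap[of _ S])
  also have "\<dots> \<le> (\<Sum>i<m. sum_list (map R (del i xs)) / real (m - 1)) / real m"
    using assms(3) by (intro divide_right_mono sum_mono) auto
  also have "\<dots> = sum_list (map R xs) / real m"
    using sum_sum_list_map_del[of R xs] assms(1,2)
    by (simp add: sum_divide_distrib[symmetric] of_nat_diff)
  finally show ?thesis .
qed

lemma symmetric_op_mset_eq:
  assumes "symmetric_op k s" "length y = k" "mset z = mset y"
  shows "s z = s y"
proof -
  obtain p where p: "p permutes {0..<k}" "permute_list p y = z"
    using mset_eq_permutation[OF assms(3)] assms(2) by (metis atLeast0LessThan)
  then have "z = map (\<lambda>i. y ! p i) [0..<k]"
    using assms(2) by (simp add: permute_list_def)
  with assms(1,2) p(1) show ?thesis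
    by (simp add: symmetric_op_def tuples_def)
qed

lemma one_s_in_maps: "one_s m s \<in> maps m"
  by (auto simp: maps_def one_s_def tuples_def)

lemma one_s_in_Omega:
  assumes sym: "symmetric_op (m - 1) s"
  shows "one_s m s \<in> Omega m"
  unfolding Omega_def
proof (intro CollectI conjI allI impI)
  show "one_s m s \<in> maps m"
    by (rule one_s_in_maps)
  fix \<pi> and x :: "'a list"
  assume \<pi>: "\<pi> permutes {0..<m}" and x: "x \<in> tuples m"
  define x\<pi> where "x\<pi> = map (\<lambda>i. x ! \<pi> i) [0..<m]"
  have len: "length x = m" "length x\<pi> = m"
    using x by (simp_all add: tuples_def x\<pi>_def)
  have \<pi>_less: "\<pi> i < m" if "i < m" for i
    using \<pi> that by (meson atLeastLessThan_iff permutes_in_image zero_le)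
  have mset_x\<pi>: "mset x\<pi> = mset x"
    using mset_permute_list[of \<pi> x] \<pi> len by (simp add: permute_list_def x\<pi>_def atLeast0LessThan)
  have "s (del (\<pi> k) x) = s (del k x\<pi>)" if k: "k < m" for k
  proof -
    have "x\<pi> ! k = x ! \<pi> k" using k by (simp add: x\<pi>_def)
    then have "mset (del k x\<pi>) = mset (del (\<pi> k) x)"
      using mset_del[of k x\<pi>] mset_del[of "\<pi> k" x] k \<pi>_less[OF k] len mset_x\<pi> by simp
    then show ?thesis
      using symmetric_op_mset_eq[OF sym, of "del (\<pi> k) x" "del k x\<pi>"] \<pi>_less[OF k] len by simp
  qed
  then show "map (\<lambda>i. one_s m s x ! \<pi> i) [0..<m] = one_s m s x\<pi>"
    using x \<pi>_less len by (auto intro!: nth_equalityI simp: one_s_def tuples_def)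
qed

lemma inj_on_one_s:
  assumes "m \<ge> 1"
  shows "inj_on (one_s m) (ops (m - 1))"
proof (rule inj_onI)
  fix s t :: "'a list \<Rightarrow> 'a"
  assume s: "s \<in> ops (m - 1)" and t: "t \<in> ops (m - 1)" and eq: "one_s m s = one_s m t"
  show "s = t"
  proof
    fix y
    show "s y = t y"
    proof (cases "y \<in> tuples (m - 1)")
      case True
      define x where "x = y @ [undefined]"
      have "x \<in> tuples m" "del (m - 1) x = y"
        using True assms by (simp_all add: x_def tuples_def del_def)
      then have "one_s m u x ! (m - 1) = u y" for u :: "'a list \<Rightarrow> 'a"
        using assms by (simp add: one_s_def)
      then show ?thesis using eq by metis
    next
      case False
      then show ?thesis using s t by (simp add: ops_def PiE_def extensional_def)
    qed
  qed
qed

lemma inj_on_one_s_supp: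
  "fractional_polymorphism \<Gamma> (m - 1) \<nu> \<Longrightarrow> m \<ge> 1 \<Longrightarrow> inj_on (one_s m) (supp \<nu>)"
  using inj_on_one_s[of m]
  by (auto simp: fractional_polymorphism_def prob_dist_def intro: inj_on_subset)

lemma apply_map_one_s:
  assumes "length xs = m" "i < m"
  shows "apply_map (one_s m s) m n xs ! i = apply_op s (m - 1) n (del i xs)"
proof -
  have "del i (map (\<lambda>l. xs ! l ! j) [0..<m]) = map (\<lambda>l. del i xs ! l ! j) [0..<m - 1]" for j
    using assms by (auto intro!: nth_equalityI simp: nth_del)
  then show ?thesis
    using assms(2) by (simp add: apply_map_def apply_op_def one_s_def tuples_def)
qed

lemma comp_closure_mono: "A \<subseteq> B \<Longrightarrow> comp_closure m A \<subseteq> comp_closure m B"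
proof
  fix g assume "A \<subseteq> B" "g \<in> comp_closure m A"
  then show "g \<in> comp_closure m B"
    by (induction rule: comp_closure.induct[OF \<open>g \<in> comp_closure m A\<close>])
      (auto intro: comp_closure.intros)
qed

definition image_dist :: "('a \<Rightarrow> 'b) \<Rightarrow> ('a \<Rightarrow> real) \<Rightarrow> 'b \<Rightarrow> real" where
  "image_dist h \<nu> y = (if y \<in> h ` supp \<nu> then \<nu> (the_inv_into (supp \<nu>) h y) else 0)"

lemma image_dist_apply:
  "inj_on h (supp \<nu>) \<Longrightarrow> s \<in> supp \<nu> \<Longrightarrow> image_dist h \<nu> (h s) = \<nu> s"
  by (simp add: image_dist_def the_inv_into_f_f)

lemma supp_image_dist:
  assumes "inj_on h (supp \<nu>)"
  shows "supp (image_dist h \<nu>) = h ` supp \<nu>"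
  using image_dist_apply[OF assms] by (force simp: supp_def image_dist_def)

lemma sum_supp_image_dist:
  assumes "inj_on h (supp \<nu>)"
  shows "(\<Sum>y\<in>supp (image_dist h \<nu>). F y (image_dist h \<nu> y)) = (\<Sum>s\<in>supp \<nu>. F (h s) (\<nu> s))"
  unfolding supp_image_dist[OF assms]
  by (rule sum.reindex_cong[OF assms refl]) (simp add: image_dist_apply[OF assms])

lemma prob_dist_image_dist:
  assumes "prob_dist A \<nu>" "inj_on h (supp \<nu>)" "h ` supp \<nu> \<subseteq> B"
  shows "prob_dist B (image_dist h \<nu>)"
  using assms sum_supp_image_dist[OF assms(2), of "\<lambda>_ r. r"]
  by (auto simp: prob_dist_def supp_image_dist image_dist_def)

lemma language_not_MInfty:
  "language \<Gamma> \<Longrightarrow> (n, f) \<in> \<Gamma> \<Longrightarrow> x \<in> tuples n \<Longrightarrow> f x \<noteq> -\<infinity>"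
  by (fastforce simp: language_def)

lemma dom_cost_real:
  assumes "language \<Gamma>" "(n, f) \<in> \<Gamma>" "x \<in> dom_cost n f"
  shows "f x = ereal (real_of_ereal (f x))"
  using assms language_not_MInfty[OF assms(1,2)] by (cases "f x") (auto simp: dom_cost_def)

lemma avg_cost_eq_ereal:
  assumes "\<And>i. i < m \<Longrightarrow> f (xs ! i) = ereal (g i)"
  shows "avg_cost m f xs = ereal ((\<Sum>i<m. g i) / real m)"
proof -
  have "(\<Sum>i<m. f (xs ! i)) = ereal (\<Sum>i<m. g i)"
    using assms by (simp add: sum_ereal[symmetric] del: sum_ereal)
  then show ?thesis by (simp add: avg_cost_def)
qed

lemma fractional_polymorphism_real_ineq:
  fixes ys :: "'a list list"
  assumes \<Gamma>: "language \<Gamma>" and fp: "fractional_polymorphism \<Gamma> k \<nu>" and f: "(n, f) \<in> \<Gamma>"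
    and ys: "length ys = k" "\<And>i. i < k \<Longrightarrow> ys ! i \<in> dom_cost n f"
  defines "R \<equiv> \<lambda>x. real_of_ereal (f x)"
  shows "\<And>s. s \<in> supp \<nu> \<Longrightarrow> f (apply_op s k n ys) = ereal (R (apply_op s k n ys))"
    and "(\<Sum>s\<in>supp \<nu>. \<nu> s * R (apply_op s k n ys)) \<le> sum_list (map R ys) / real k"
proof -
  have real_on_tuples: "f x = ereal (R x)" if "x \<in> tuples n" "f x \<noteq> \<infinity>" for x
    using language_not_MInfty[OF \<Gamma> f that(1)] that(2) by (cases "f x") (simp_all add: R_def)
  have ineq: "(\<Sum>s\<in>supp \<nu>. ereal (\<nu> s) * f (apply_op s k n ys)) \<le> avg_cost k f ys"
    using fp f ys by (auto simp: fractional_polymorphism_def)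
  have avg: "avg_cost k f ys = ereal (sum_list (map R ys) / real k)"
    using ys dom_cost_real[OF \<Gamma> f]
    by (subst avg_cost_eq_ereal[where g = "\<lambda>l. R (ys ! l)"])
      (simp_all add: R_def sum_list_sum_nth atLeast0LessThan)
  have pos: "\<nu> s > 0" if "s \<in> supp \<nu>" for s
    using fp that by (force simp: fractional_polymorphism_def prob_dist_def supp_def less_le)
  have fin: "finite (supp \<nu>)"
    using fp by (simp add: fractional_polymorphism_def prob_dist_def)
  show finite_values: "f (apply_op s k n ys) = ereal (R (apply_op s k n ys))" if s: "s \<in> supp \<nu>" for s
  proof (rule real_on_tuples)
    show "apply_op s k n ys \<in> tuples n" by (simp add: apply_op_def tuples_def)
    show "f (apply_op s k n ys) \<noteq> \<infinity>"
    proof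
      assume "f (apply_op s k n ys) = \<infinity>"
      then have "ereal (\<nu> s) * f (apply_op s k n ys) = \<infinity>" using pos[OF s] by simp
      then have "(\<Sum>s\<in>supp \<nu>. ereal (\<nu> s) * f (apply_op s k n ys)) = \<infinity>"
        using fin s by (auto simp: sum_Pinfty)
      with ineq avg show False by simp
    qed
  qed
  have "(\<Sum>s\<in>supp \<nu>. ereal (\<nu> s) * f (apply_op s k n ys))
      = ereal (\<Sum>s\<in>supp \<nu>. \<nu> s * R (apply_op s k n ys))"
    by (simp add: finite_values sum_ereal[symmetric] del: sum_ereal)
  with ineq avg show "(\<Sum>s\<in>supp \<nu>. \<nu> s * R (apply_op s k n ys)) \<le> sum_list (map R ys) / real k"
    by simp
qed

lemma one_s_generalized_fractional_polymorphism:
  assumes \<Gamma>: "language \<Gamma>" and "m \<ge> 2"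
    and sfp: "symmetric_fractional_polymorphism \<Gamma> (m - 1) \<omega>'"
  shows "generalized_fractional_polymorphism \<Gamma> m (image_dist (one_s m) \<omega>')"
proof -
  have fp: "fractional_polymorphism \<Gamma> (m - 1) \<omega>'"
    using sfp by (simp add: symmetric_fractional_polymorphism_def)
  then have pd: "prob_dist (ops (m - 1)) \<omega>'"
    by (simp add: fractional_polymorphism_def)
  have inj: "inj_on (one_s m) (supp \<omega>')"
    using inj_on_one_s_supp[OF fp] \<open>m \<ge> 2\<close> by simp
  have "prob_dist (maps m) (image_dist (one_s m) \<omega>')"
    by (rule prob_dist_image_dist[OF pd inj]) (auto intro: one_s_in_maps)
  moreover
  have "(\<Sum>g\<in>supp (image_dist (one_s m) \<omega>'). ereal (image_dist (one_s m) \<omega>' g) *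
          avg_cost m f (apply_map g m n xs)) \<le> avg_cost m f xs"
    if f: "(n, f) \<in> \<Gamma>" and xs: "length xs = m" "\<And>l. l < m \<Longrightarrow> xs ! l \<in> dom_cost n f"
    for n f xs
  proof -
    define R where "R x = real_of_ereal (f x)" for x
    define T where "T i s = apply_op s (m - 1) n (del i xs)" for i s
    have del_dom: "del i xs ! l \<in> dom_cost n f" if "i < m" "l < m - 1" for i l
      using that xs by (simp add: nth_del)
    have del_len: "length (del i xs) = m - 1" if "i < m" for i
      using that xs(1) by simp
    have finite_row: "f (T i s) = ereal (R (T i s))" if "i < m" "s \<in> supp \<omega>'" for i s
      using fractional_polymorphism_real_ineq(1)[OF \<Gamma> fp f del_len[OF that(1)] del_dom[OF that(1)]]
        that \<open>m \<ge> 2\<close> unfolding R_def T_def by simp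
    have deletion: "(\<Sum>s\<in>supp \<omega>'. \<omega>' s * R (T i s)) \<le> sum_list (map R (del i xs)) / real (m - 1)"
      if "i < m" for i
      using fractional_polymorphism_real_ineq(2)[OF \<Gamma> fp f del_len[OF that] del_dom[OF that]]
        \<open>m \<ge> 2\<close> unfolding R_def T_def by simp
    have row: "avg_cost m f (apply_map (one_s m s) m n xs) = ereal ((\<Sum>i<m. R (T i s)) / real m)"
      if "s \<in> supp \<omega>'" for s
      using finite_row that xs(1)
      by (intro avg_cost_eq_ereal) (simp add: apply_map_one_s T_def)
    have real_ineq: "(\<Sum>s\<in>supp \<omega>'. \<omega>' s * ((\<Sum>i<m. R (T i s)) / real m))
        \<le> sum_list (map R xs) / real m"
      using xs(1) \<open>m \<ge> 2\<close> deletion by (rule average_over_deletions_le)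
    have avg: "avg_cost m f xs = ereal (sum_list (map R xs) / real m)"
      using xs dom_cost_real[OF \<Gamma> f]
      by (subst avg_cost_eq_ereal[where g = "\<lambda>l. R (xs ! l)"])
        (simp_all add: R_def sum_list_sum_nth atLeast0LessThan)
    have "(\<Sum>g\<in>supp (image_dist (one_s m) \<omega>'). ereal (image_dist (one_s m) \<omega>' g) *
          avg_cost m f (apply_map g m n xs))
        = (\<Sum>s\<in>supp \<omega>'. ereal (\<omega>' s) * avg_cost m f (apply_map (one_s m s) m n xs))"
      by (rule sum_supp_image_dist[OF inj])
    also have "\<dots> = ereal (\<Sum>s\<in>supp \<omega>'. \<omega>' s * ((\<Sum>i<m. R (T i s)) / real m))"
      unfolding sum_ereal[symmetric] by (intro sum.cong) (simp_all add: row)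
    finally show ?thesis
      using real_ineq avg by simp
  qed
  ultimately show ?thesis
    by (auto simp: generalized_fractional_polymorphism_def)
qed

theorem proposition7p6:
  fixes \<Gamma> :: "(nat \<times> ('d::finite list \<Rightarrow> ereal)) set"
    and m :: nat
    and \<omega> :: "('d list \<Rightarrow> 'd list) \<Rightarrow> real"
    and \<omega>' :: "('d list \<Rightarrow> 'd) \<Rightarrow> real"
  assumes "language \<Gamma>"
    and "m \<ge> 3"
    and "generalized_fractional_polymorphism \<Gamma> m \<omega>"
    and "supp \<omega> \<subseteq> Omega m"
    and "\<forall>\<rho>. generalized_fractional_polymorphism \<Gamma> m \<rho> \<and> supp \<rho> \<subseteq> Omega m
            \<longrightarrow> supp \<rho> \<subseteq> supp \<omega>"
    and "symmetric_fractional_polymorphism \<Gamma> (m - 1) \<omega>'"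
  shows "comp_closure m (one_s m ` supp \<omega>') \<subseteq> comp_closure m (supp \<omega>)"
proof -
  have inj: "inj_on (one_s m) (supp \<omega>')"
    using inj_on_one_s_supp[of \<Gamma> m \<omega>'] assms(2,6) by (simp add: symmetric_fractional_polymorphism_def)
  let ?\<rho> = "image_dist (one_s m) \<omega>'"
  have "generalized_fractional_polymorphism \<Gamma> m ?\<rho>"
    using one_s_generalized_fractional_polymorphism[OF assms(1) _ assms(6)] assms(2) by simp
  moreover have "supp ?\<rho> \<subseteq> Omega m"
    using assms(6) one_s_in_Omega
    by (auto simp: supp_image_dist[OF inj] symmetric_fractional_polymorphism_def)
  ultimately have "one_s m ` supp \<omega>' \<subseteq> supp \<omega>"
    using assms(5) supp_image_dist[OF inj] by metis
  then show ?thesis by (rule comp_closure_mono)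
qed

end
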